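(* Let $\mathcal{G}^c=(\mathbb{C},\mathbb{E}^c)$ be a C-DMG, $\mathcal{G}$ a DMG compatible with it, $\mathbb{C}_A\subseteq\mathbb{C}$ a set of clusters and $A=\bigcup_{C\in\mathbb{C}_A}C$. Let $\mathcal{G}^c_{\overline{\mathbb{C}_A}}$ and $\mathcal{G}_{\overline{A}}$ be the graphs obtained by intervening on $\mathbb{C}_A$ in $\mathcal{G}^c$ and on $A$ in $\mathcal{G}$. Then $\mathcal{G}_{\overline{A}}$ is compatible with $\mathcal{G}^c_{\overline{\mathbb{C}_A}}$. Moreover, if $\mathcal{M}(\mathcal{G}^c)$ denotes the maximal compatible DMG of $\mathcal{G}^c$, then $\mathcal{M}(\mathcal{G}^c)_{\overline{A}}$ and $\mathcal{M}(\mathcal{G}^c_{\overline{\mathbb{C}_A}})$ are the same graph.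
   Context: A DMG has directed edges $\to$ and bidirected edges $\leftrightarrow$, cycles allowed. Given a graph $\mathcal{G}=(\mathbb{V},\mathbb{E})$ and a partition $\mathbb{C}$ of $\mathbb{V}$ into nonempty clusters, $\mathcal{G}$ is compatible with $\mathcal{G}^c=(\mathbb{C},\mathbb{E}^c)$ if for all $C_i,C_j\in\mathbb{C}$ (possibly equal), $C_i\to C_j$ (resp. $C_i\leftrightarrow C_j$) is in $\mathbb{E}^c$ iff there exist $V_i\in C_i,V_j\in C_j$ with $V_i\to V_j$ (resp. $V_i\leftrightarrow V_j$) in $\mathbb{E}$; a C-DMG is such a $\mathcal{G}^c$ for some DMG. Intervening on a vertex set $D$ in a graph means removing all directed edges whose head is in $D$ and all bidirected edges with an endpoint in $D$. The maximal compatible DMG $\mathcal{M}(\mathcal{G}^c)$ of a C-DMG $\mathcal{G}^c$ has vertex set $\bigcup_{C\in\mathbb{C}}C$, directed edges $V\to V'$ for all $V\in C,V'\in C'$ with $C\to C'\in\mathbb{E}^c$, and bidirected edges $V\leftrightarrow V'$ for all $V\in C,V'\in C'$ with $C\leftrightarrow C'\in\mathbb{E}^c$. *)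

theory Defs
  imports Main
begin

text \<open>A directed mixed graph (DMG), cycles allowed: vertex set, directed edges
 (pairs (u,v) meaning u \<rightarrow> v, self-loops allowed), bidirected edges
 (pairs (u,v) meaning u \<leftrightarrow> v, stored symmetrically).\<close>
record 'v mgraph =
  verts :: "'v set"
  dir :: "('v \<times> 'v) set"
  bidir :: "('v \<times> 'v) set"

definition is_DMG :: "'v mgraph \<Rightarrow> bool" where
  "is_DMG G \<longleftrightarrow> dir G \<subseteq> verts G \<times> verts G \<and> bidir G \<subseteq> verts G \<times> verts G
     \<and> sym (bidir G)"

definition is_partition :: "'a set set \<Rightarrow> 'a set \<Rightarrow> bool" where
  "is_partition CC V \<longleftrightarrow> \<Union>CC = V \<and> {} \<notin> CC
     \<and> (\<forall>C1\<in>CC. \<forall>C2\<in>CC. C1 \<noteq> C2 \<longrightarrow> C1 \<inter> C2 = {})"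

definition compatible :: "'a mgraph \<Rightarrow> 'a set mgraph \<Rightarrow> bool" where
  "compatible G Gc \<longleftrightarrow> is_DMG G \<and> is_partition (verts Gc) (verts G) \<and>
     (\<forall>Ci\<in>verts Gc. \<forall>Cj\<in>verts Gc.
        ((Ci, Cj) \<in> dir Gc \<longleftrightarrow> (\<exists>Vi\<in>Ci. \<exists>Vj\<in>Cj. (Vi, Vj) \<in> dir G)) \<and>
        ((Ci, Cj) \<in> bidir Gc \<longleftrightarrow> (\<exists>Vi\<in>Ci. \<exists>Vj\<in>Cj. (Vi, Vj) \<in> bidir G))) \<and>
     dir Gc \<subseteq> verts Gc \<times> verts Gc \<and> bidir Gc \<subseteq> verts Gc \<times> verts Gc"

definition is_CDMG :: "'a set mgraph \<Rightarrow> bool" where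
  "is_CDMG Gc \<longleftrightarrow> (\<exists>G. compatible G Gc)"

definition intervene :: "'v mgraph \<Rightarrow> 'v set \<Rightarrow> 'v mgraph" where
  "intervene G D = \<lparr> verts = verts G,
     dir = {(u, v) \<in> dir G. v \<notin> D},
     bidir = {(u, v) \<in> bidir G. u \<notin> D \<and> v \<notin> D} \<rparr>"

definition maximal_DMG :: "'a set mgraph \<Rightarrow> 'a mgraph" where
  "maximal_DMG Gc = \<lparr> verts = \<Union>(verts Gc),
     dir = {(V, V'). \<exists>C C'. (C, C') \<in> dir Gc \<and> V \<in> C \<and> V' \<in> C'},
     bidir = {(V, V'). \<exists>C C'. (C, C') \<in> bidir Gc \<and> V \<in> C \<and> V' \<in> C'} \<rparr>"

end

theory Submission
  imports Defs
begin

text \<open>Since A is a union of clusters of a partition, a vertex lies in A exactly when its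
 cluster lies in CA. Hence an edge between two vertices is deleted by intervening on A
 exactly when the corresponding cluster edge is deleted by intervening on CA; this gives
 both compatibility and the equality of the two maximal DMGs.\<close>

lemma partition_pairwise_disjnt:
  "is_partition CC V \<Longrightarrow> pairwise disjnt CC"
  unfolding is_partition_def pairwise_def disjnt_def by blast

lemma mem_Union_clusters_iff:
  assumes "pairwise disjnt CC" "CA \<subseteq> CC" "C \<in> CC" "v \<in> C"
  shows "v \<in> \<Union>CA \<longleftrightarrow> C \<in> CA"
proof
  assume "v \<in> \<Union>CA"
  then obtain D where "D \<in> CA" "v \<in> D" by blast
  with assms have "D = C"
    by (metis disjnt_iff pairwiseD subsetD)
  with \<open>D \<in> CA\<close> show "C \<in> CA" by simp
qed (use assms(4) in blast)

lemma verts_intervene [simp]: "verts (intervene G D) = verts G"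
  by (simp add: intervene_def)

lemma is_DMG_intervene: "is_DMG G \<Longrightarrow> is_DMG (intervene G D)"
  unfolding is_DMG_def intervene_def sym_def by auto

lemma compatible_intervene:
  assumes "compatible G Gc" "CA \<subseteq> verts Gc"
  shows "compatible (intervene G (\<Union>CA)) (intervene Gc CA)"
proof -
  have partition: "is_partition (verts Gc) (verts G)"
    and dir_iff: "\<And>Ci Cj. Ci \<in> verts Gc \<Longrightarrow> Cj \<in> verts Gc \<Longrightarrow>
      (Ci, Cj) \<in> dir Gc \<longleftrightarrow> (\<exists>Vi\<in>Ci. \<exists>Vj\<in>Cj. (Vi, Vj) \<in> dir G)"
    and bidir_iff: "\<And>Ci Cj. Ci \<in> verts Gc \<Longrightarrow> Cj \<in> verts Gc \<Longrightarrow>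
      (Ci, Cj) \<in> bidir Gc \<longleftrightarrow> (\<exists>Vi\<in>Ci. \<exists>Vj\<in>Cj. (Vi, Vj) \<in> bidir G)"
    using assms(1) unfolding compatible_def by auto
  have in_A_iff: "v \<in> \<Union>CA \<longleftrightarrow> C \<in> CA" if "C \<in> verts Gc" "v \<in> C" for C v
    using mem_Union_clusters_iff[OF partition_pairwise_disjnt[OF partition] assms(2) that] .
  \<comment> \<open>Union_iff is removed so that membership in A stays in the form decided by in_A_iff.\<close>
  have dir_edge: "(Vi, Vj) \<in> dir (intervene G (\<Union>CA)) \<longleftrightarrow> (Vi, Vj) \<in> dir G \<and> Cj \<notin> CA"
    if "Cj \<in> verts Gc" "Vj \<in> Cj" for Vi Vj Cj
    using in_A_iff[OF that] by (simp add: intervene_def del: Union_iff)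
  have bidir_edge: "(Vi, Vj) \<in> bidir (intervene G (\<Union>CA))
      \<longleftrightarrow> (Vi, Vj) \<in> bidir G \<and> Ci \<notin> CA \<and> Cj \<notin> CA"
    if "Ci \<in> verts Gc" "Vi \<in> Ci" "Cj \<in> verts Gc" "Vj \<in> Cj" for Vi Vj Ci Cj
    using in_A_iff[OF that(1,2)] in_A_iff[OF that(3,4)] by (simp add: intervene_def del: Union_iff)
  have dir_clusters: "(Ci, Cj) \<in> dir (intervene Gc CA)
      \<longleftrightarrow> (\<exists>Vi\<in>Ci. \<exists>Vj\<in>Cj. (Vi, Vj) \<in> dir (intervene G (\<Union>CA)))"
    if "Ci \<in> verts Gc" "Cj \<in> verts Gc" for Ci Cj
    using dir_iff[OF that] dir_edge[OF that(2)] by (auto simp: intervene_def)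
  have bidir_clusters: "(Ci, Cj) \<in> bidir (intervene Gc CA)
      \<longleftrightarrow> (\<exists>Vi\<in>Ci. \<exists>Vj\<in>Cj. (Vi, Vj) \<in> bidir (intervene G (\<Union>CA)))"
    if "Ci \<in> verts Gc" "Cj \<in> verts Gc" for Ci Cj
    using bidir_iff[OF that] bidir_edge[OF that(1) _ that(2)] by (auto simp: intervene_def)
  have "dir (intervene Gc CA) \<subseteq> verts Gc \<times> verts Gc"
    "bidir (intervene Gc CA) \<subseteq> verts Gc \<times> verts Gc"
    using assms(1) by (auto simp: compatible_def intervene_def)
  moreover have "is_DMG (intervene G (\<Union>CA))"
    using assms(1) by (simp add: compatible_def is_DMG_intervene)
  ultimately show ?thesis
    unfolding compatible_def verts_intervene
    using partition dir_clusters bidir_clusters by (intro conjI ballI) simp_all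
qed

lemma intervene_maximal_DMG:
  assumes "pairwise disjnt (verts Gc)"
    and "dir Gc \<subseteq> verts Gc \<times> verts Gc" "bidir Gc \<subseteq> verts Gc \<times> verts Gc"
    and "CA \<subseteq> verts Gc"
  shows "intervene (maximal_DMG Gc) (\<Union>CA) = maximal_DMG (intervene Gc CA)"
proof -
  have in_A_iff: "v \<in> \<Union>CA \<longleftrightarrow> C \<in> CA" if "C \<in> verts Gc" "v \<in> C" for C v
    using mem_Union_clusters_iff[OF assms(1,4) that] .
  have head_in_A_iff: "V' \<in> \<Union>CA \<longleftrightarrow> C' \<in> CA" if "(C, C') \<in> dir Gc" "V' \<in> C'" for C C' V'
    using in_A_iff assms(2) that by blast
  have ends_in_A_iff: "V \<in> \<Union>CA \<longleftrightarrow> C \<in> CA" "V' \<in> \<Union>CA \<longleftrightarrow> C' \<in> CA"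
    if "(C, C') \<in> bidir Gc" "V \<in> C" "V' \<in> C'" for C C' V V'
    using in_A_iff assms(3) that by blast+
  have "dir (intervene (maximal_DMG Gc) (\<Union>CA)) = dir (maximal_DMG (intervene Gc CA))"
    using head_in_A_iff unfolding intervene_def maximal_DMG_def
    by (auto simp del: Union_iff) blast+
  moreover have "bidir (intervene (maximal_DMG Gc) (\<Union>CA)) = bidir (maximal_DMG (intervene Gc CA))"
    using ends_in_A_iff unfolding intervene_def maximal_DMG_def
    by (auto simp del: Union_iff) blast+
  ultimately show ?thesis
    by (simp add: intervene_def maximal_DMG_def)
qed

theorem mainTheorem6:
  fixes Gc :: "'a set mgraph" and G :: "'a mgraph" and CA :: "'a set set"
  assumes "is_CDMG Gc"
    and "compatible G Gc"
    and "CA \<subseteq> verts Gc"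
    and "A = \<Union>CA"
  shows "compatible (intervene G A) (intervene Gc CA)
     \<and> intervene (maximal_DMG Gc) A = maximal_DMG (intervene Gc CA)"
proof
  show "compatible (intervene G A) (intervene Gc CA)"
    unfolding assms(4) using assms(2,3) by (rule compatible_intervene)
  have "is_partition (verts Gc) (verts G)"
    and "dir Gc \<subseteq> verts Gc \<times> verts Gc" "bidir Gc \<subseteq> verts Gc \<times> verts Gc"
    using assms(2) by (simp_all add: compatible_def)
  with assms(3) show "intervene (maximal_DMG Gc) A = maximal_DMG (intervene Gc CA)"
    unfolding assms(4) by (blast intro: intervene_maximal_DMG partition_pairwise_disjnt)
qed

end
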